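(* Let $d > 1$ be an integer and $p$ a prime. Consider the game in which Nora and Wanda choose the coefficients of a degree $d$ polynomial from $\mathbb{Q}$, and Wanda wins if and only if the final polynomial has a root in $D_2$, where $D_2$ is any (unital) subring of $\mathbb{Q}_p$, the field of $p$-adic numbers. Then the player who makes the last move has a winning strategy.
   Context: The game: Nora and Wanda alternately choose coefficients of a polynomial $f(x) = a_d x^d + \cdots + a_1 x + a_0$; on each move the current player picks a not-yet-chosen coefficient $a_i$ and assigns it a value in $\mathbb{Q}$, subject to $a_d \neq 0$ and $a_0 \neq 0$. After all $d+1$ coefficients are chosen, Wanda wins if $f$ has a root in $D_2$, and Nora wins otherwise. Who moves first is fixed in advance, which determines who makes the last move; "the player who makes the last move has a winning strategy" is asserted for either such assignment. *)

theory Defs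
  imports Complex_Main "HOL-Computational_Algebra.Computational_Algebra"
begin

definition padic_val_rat :: "nat \<Rightarrow> rat \<Rightarrow> int" where
  "padic_val_rat p q =
     int (multiplicity (int p) (fst (quotient_of q)))
   - int (multiplicity (int p) (snd (quotient_of q)))"

definition padic_abs_rat :: "nat \<Rightarrow> rat \<Rightarrow> real" where
  "padic_abs_rat p q = (if q = 0 then 0 else real p powi (- padic_val_rat p q))"

text \<open>A field K of characteristic 0 (Q embedded via of_rat) together with an absolute
  value av is (a copy of) Q_p iff av extends the p-adic absolute value of Q, K is
  complete for av and Q is dense in K.  Completions are unique up to isometric
  isomorphism, so this determines Q_p.\<close>

definition is_Qp :: "nat \<Rightarrow> ('k::field_char_0 \<Rightarrow> real) \<Rightarrow> bool" where
  "is_Qp p av \<longleftrightarrow>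
     (\<forall>x. av x \<ge> 0) \<and>
     (\<forall>x. av x = 0 \<longleftrightarrow> x = 0) \<and>
     (\<forall>x y. av (x * y) = av x * av y) \<and>
     (\<forall>x y. av (x + y) \<le> av x + av y) \<and>
     (\<forall>q. av (of_rat q) = padic_abs_rat p q) \<and>
     (\<forall>X::nat \<Rightarrow> 'k.
        (\<forall>e>0. \<exists>N. \<forall>m\<ge>N. \<forall>n\<ge>N. av (X m - X n) < e) \<longrightarrow>
        (\<exists>L. \<forall>e>0. \<exists>N. \<forall>n\<ge>N. av (X n - L) < e)) \<and>
     (\<forall>x. \<forall>e>0. \<exists>q. av (x - of_rat q) < e)"

definition unital_subring :: "'k::ring_1 set \<Rightarrow> bool" where
  "unital_subring D \<longleftrightarrow> 1 \<in> D \<and> (\<forall>x\<in>D. \<forall>y\<in>D. x - y \<in> D \<and> x * y \<in> D)"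

text \<open>A position records which coefficients a_0..a_d have been chosen (Some value).
  A legal move picks an unchosen index i \<le> d and a rational value, nonzero if i = 0
  or i = d.\<close>

type_synonym position = "nat \<Rightarrow> rat option"

definition legal_move :: "nat \<Rightarrow> position \<Rightarrow> nat \<Rightarrow> rat \<Rightarrow> bool" where
  "legal_move d s i c \<longleftrightarrow> i \<le> d \<and> s i = None \<and> ((i = 0 \<or> i = d) \<longrightarrow> c \<noteq> 0)"

text \<open>can_force d G b k s: with k moves remaining from position s, the player X whose
  goal is G (evaluated on the final position) can force G; b says whether X is to move.  For a finite game this is exactly "X has a winning strategy".\<close>

fun can_force :: "nat \<Rightarrow> (position \<Rightarrow> bool) \<Rightarrow> bool \<Rightarrow> nat \<Rightarrow> position \<Rightarrow> bool" where
  "can_force d G b 0 s = G s"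
| "can_force d G b (Suc k) s =
     (if b then (\<exists>i c. legal_move d s i c \<and> can_force d G False k (s(i := Some c)))
      else (\<forall>i c. legal_move d s i c \<longrightarrow> can_force d G True k (s(i := Some c))))"

definition final_poly :: "nat \<Rightarrow> position \<Rightarrow> rat poly" where
  "final_poly d s = (\<Sum>i\<le>d. monom (the (s i)) i)"

definition wanda_goal :: "nat \<Rightarrow> 'k::field_char_0 set \<Rightarrow> position \<Rightarrow> bool" where
  "wanda_goal d D s \<longleftrightarrow> (\<exists>x\<in>D. poly (map_poly of_rat (final_poly d s)) x = 0)"

definition nora_goal :: "nat \<Rightarrow> 'k::field_char_0 set \<Rightarrow> position \<Rightarrow> bool" where
  "nora_goal d D s \<longleftrightarrow> \<not> wanda_goal d D s"

definition wanda_wins :: "nat \<Rightarrow> 'k::field_char_0 set \<Rightarrow> bool \<Rightarrow> bool" where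
  "wanda_wins d D wanda_first = can_force d (wanda_goal d D) wanda_first (d + 1) (\<lambda>_. None)"

definition nora_wins :: "nat \<Rightarrow> 'k::field_char_0 set \<Rightarrow> bool \<Rightarrow> bool" where
  "nora_wins d D wanda_first = can_force d (nora_goal d D) (\<not> wanda_first) (d + 1) (\<lambda>_. None)"

text \<open>Moves are numbered 1..d+1; the first mover makes the odd-numbered ones, so
  Wanda makes the last move iff (wanda_first = odd (d+1)).\<close>

definition wanda_moves_last :: "nat \<Rightarrow> bool \<Rightarrow> bool" where
  "wanda_moves_last d wanda_first \<longleftrightarrow> (wanda_first \<longleftrightarrow> odd (d + 1))"

end

theory Submission
  imports Defs
begin

text \<open>Whoever fills the last free coefficient a_i wins. Wanda makes a positive integer n,
  which lies in D, a root: the remaining coefficients include a nonzero extreme one, so they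
  vanish at only finitely many n, and a_i is then determined. Nora makes the polynomial
  rootless in all of Q_p. At a root x the maximum of av a_j * av x^j is attained twice. If i
  is 0, d, or lies in [2, d - 2] with d \<ge> 5, she chooses av a_i = p^N with N huge and outside
  the residue classes modulo i and d - i that would allow a tie with a_0 or with a_d x^d;
  the indices 1 and d - 1 she fills herself beforehand. For d \<le> 4 she instead zeroes the
  middle coefficients, so that a middle last index leaves a trinomial a_0 + c x^i + a_d x^d;
  scaling x makes the outer coefficients units, and c is chosen among 0, ..., p - 1 so that
  the trinomial is a unit at every nonzero residue.\<close>

section \<open>Absolute values\<close>

lemma exists_linear_lt_power:
  fixes q :: real
  assumes "q > 1"
  shows "\<exists>n. real n + 1 < q ^ n"
proof -
  have "(\<lambda>n. real n / q ^ n + 1 / q ^ n) \<longlonglongrightarrow> 0 + 0"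
    using assms by (intro tendsto_add lim_n_over_pown LIMSEQ_divide_realpow_zero) auto
  then have "\<forall>\<^sub>F n in sequentially. real n / q ^ n + 1 / q ^ n < 1"
    by (intro order_tendstoD) auto
  then obtain n where "(real n + 1) / q ^ n < 1"
    using eventually_sequentially by (auto simp: add_divide_distrib)
  then show ?thesis
    using assms by (auto simp: divide_less_eq)
qed

locale absolute_value =
  fixes av :: "'k::field \<Rightarrow> real"
  assumes av_nonneg: "av x \<ge> 0"
    and av_eq_0_iff: "av x = 0 \<longleftrightarrow> x = 0"
    and av_mult: "av (x * y) = av x * av y"
    and av_add_le: "av (x + y) \<le> av x + av y"
begin

lemma av_pos: "x \<noteq> 0 \<Longrightarrow> av x > 0"
  using av_nonneg av_eq_0_iff by (metis less_eq_real_def)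

lemma av_0 [simp]: "av 0 = 0"
  using av_eq_0_iff by blast

lemma av_1 [simp]: "av 1 = 1"
  using av_mult[of 1 1] av_eq_0_iff[of 1] by simp

lemma av_minus [simp]: "av (- x) = av x"
proof -
  have "av (-1) * av (-1) = 1"
    using av_mult[of "-1" "-1"] by simp
  then have "av (-1) = 1"
    using av_nonneg[of "-1"] by (metis abs_of_nonneg abs_square_eq_1 power2_eq_square)
  then show ?thesis
    using av_mult[of "-1" x] by simp
qed

lemma av_minus_commute: "av (x - y) = av (y - x)"
  by (metis av_minus minus_diff_eq)

lemma av_power: "av (x ^ n) = av x ^ n"
  by (induction n) (simp_all add: av_mult)

lemma av_divide: "av (x / y) = av x / av y"
proof (cases "y = 0")
  case False
  then have "av (x / y) * av y = av x"
    by (metis av_mult nonzero_divide_eq_eq)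
  then show ?thesis
    using av_pos[OF False] by (simp add: field_simps)
qed simp

lemma av_sum_le: "av (\<Sum>i\<in>A. f i) \<le> (\<Sum>i\<in>A. av (f i))"
  by (induction A rule: infinite_finite_induct) (auto intro: order_trans[OF av_add_le])

lemma av_add_power_le:
  assumes bounded: "\<And>n. av (of_nat n) \<le> 1"
  shows "av (x + y) ^ n \<le> (real n + 1) * max (av x) (av y) ^ n"
proof -
  define M where "M = max (av x) (av y)"
  have "0 \<le> M"
    using av_nonneg[of x] unfolding M_def by linarith
  have "av (x + y) ^ n = av (\<Sum>k\<le>n. of_nat (n choose k) * x ^ k * y ^ (n - k))"
    by (simp add: av_power flip: binomial_ring)
  also have "\<dots> \<le> (\<Sum>k\<le>n. av (of_nat (n choose k) * x ^ k * y ^ (n - k)))"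
    by (rule av_sum_le)
  also have "\<dots> \<le> (\<Sum>k\<le>n. 1 * M ^ k * M ^ (n - k))"
  proof (rule sum_mono)
    fix k
    have "av (of_nat (n choose k) * x ^ k * y ^ (n - k))
        = av (of_nat (n choose k)) * av x ^ k * av y ^ (n - k)"
      by (simp add: av_mult av_power)
    also have "\<dots> \<le> 1 * M ^ k * M ^ (n - k)"
      using bounded av_nonneg \<open>0 \<le> M\<close> unfolding M_def
      by (intro mult_mono power_mono) (auto simp: zero_le_mult_iff)
    finally show "av (of_nat (n choose k) * x ^ k * y ^ (n - k)) \<le> 1 * M ^ k * M ^ (n - k)" .
  qed
  also have "\<dots> = (\<Sum>k\<le>n. M ^ n)"
    by (intro sum.cong) (auto simp: power_add[symmetric])
  finally show ?thesis
    unfolding M_def by (simp add: add.commute)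
qed

text \<open>The factor n + 1 in av_add_power_le grows slower than any exponential.\<close>

lemma ultrametric_if_of_nat_bounded:
  assumes bounded: "\<And>n. av (of_nat n) \<le> 1"
  shows "av (x + y) \<le> max (av x) (av y)"
proof (rule ccontr)
  define M where "M = max (av x) (av y)"
  assume "\<not> ?thesis"
  then have "M < av (x + y)"
    unfolding M_def by linarith
  moreover have "0 \<le> M"
    using av_nonneg[of x] unfolding M_def by linarith
  moreover have "M \<noteq> 0"
    using \<open>M < av (x + y)\<close> av_eq_0_iff unfolding M_def by (auto simp: max_def split: if_splits)
  ultimately obtain n where "real n + 1 < (av (x + y) / M) ^ n" "0 < M"
    using exists_linear_lt_power[of "av (x + y) / M"] by auto
  then have "(real n + 1) * M ^ n < av (x + y) ^ n"
    by (simp add: power_divide pos_less_divide_eq)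
  then show False
    using av_add_power_le[OF bounded, of x y n] unfolding M_def by simp
qed

end

section \<open>Non-archimedean absolute values\<close>

text \<open>In the next lemmas r stands for av x at a root x, \<alpha> j or a for the absolute values
  of the coefficients, C or \<alpha> i for that of the dominant coefficient a_i, and B for a
  bound on the others.\<close>

lemma dominated_coeff_le_below:
  fixes r a B C :: real
  assumes "0 < r" "0 < a" "a \<le> B" "0 < u" "u < i" "i \<le> d" "0 \<le> C"
    and const: "a \<le> B * r ^ u" and coeff: "C * r ^ i \<le> B * r ^ u"
  shows "C \<le> B * (B / a) ^ d"
proof -
  have "a / B \<le> r"
  proof (cases "r \<ge> 1")
    case True
    moreover have "a / B \<le> 1"
      using assms by simp
    ultimately show ?thesis
      by linarith
  next
    case False
    then have "B * r ^ u \<le> B * r"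
      using assms power_decreasing[of 1 u r] by (intro mult_left_mono) auto
    then have "a \<le> B * r"
      using const by linarith
    then show ?thesis
      using assms by (simp add: field_simps)
  qed
  have "(a / B) ^ d \<le> (a / B) ^ (i - u)"
    using assms by (intro power_decreasing) auto
  also have "\<dots> \<le> r ^ (i - u)"
    using \<open>a / B \<le> r\<close> assms by (intro power_mono) auto
  finally have "(a / B) ^ d \<le> r ^ (i - u)" .
  then have "C * (a / B) ^ d \<le> C * r ^ (i - u)"
    using assms by (intro mult_left_mono) auto
  also have "\<dots> \<le> B"
  proof -
    have "C * r ^ (i - u) * r ^ u \<le> B * r ^ u"
      using coeff \<open>u < i\<close> by (simp add: mult.assoc power_add[symmetric])
    then show ?thesis
      using \<open>0 < r\<close> by simp
  qed
  finally show ?thesis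
    using assms by (simp add: field_simps power_divide)
qed

lemma dominated_coeff_le_above:
  fixes r a B C :: real
  assumes "0 < r" "0 < a" "a \<le> B" "i < u" "u < d"
    and lead: "a * r ^ d \<le> B * r ^ u" and coeff: "C * r ^ i \<le> B * r ^ u"
  shows "C \<le> B * (B / a) ^ d"
proof -
  have "r \<le> B / a"
  proof (cases "r \<le> 1")
    case True
    moreover have "1 \<le> B / a"
      using assms by simp
    ultimately show ?thesis
      by linarith
  next
    case False
    have "a * r * r ^ u \<le> a * r ^ (d - u) * r ^ u"
      using False assms power_increasing[of 1 "d - u" r] by (intro mult_right_mono) auto
    also have "\<dots> \<le> B * r ^ u"
      using lead \<open>u < d\<close> by (simp add: mult.assoc power_add[symmetric])
    finally show ?thesis
      using assms by (simp add: field_simps)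
  qed
  have "C * r ^ i \<le> B * r ^ (u - i) * r ^ i"
    using coeff \<open>i < u\<close> by (simp add: mult.assoc power_add[symmetric])
  then have "C \<le> B * r ^ (u - i)"
    using \<open>0 < r\<close> by simp
  also have "\<dots> \<le> B * (B / a) ^ d"
  proof -
    have "r ^ (u - i) \<le> (B / a) ^ (u - i)"
      using \<open>r \<le> B / a\<close> assms by (intro power_mono) auto
    also have "\<dots> \<le> (B / a) ^ d"
      using assms by (intro power_increasing) auto
    finally show ?thesis
      using assms by (intro mult_left_mono) auto
  qed
  finally show ?thesis .
qed

lemma coeff_le_if_extremes_dominate:
  fixes r a0 ad B C :: real
  assumes "0 < r" "0 < i" "i < d" "0 \<le> C" "0 \<le> ad" "a0 \<le> B" "ad \<le> B"
    and "C * r ^ i \<le> a0" "C * r ^ i \<le> ad * r ^ d"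
  shows "C \<le> B"
proof (cases "r \<ge> 1")
  case True
  have "C * 1 \<le> C * r ^ i"
    using True assms by (intro mult_left_mono one_le_power) auto
  then show ?thesis
    using assms by simp
next
  case False
  have "ad * r ^ d \<le> ad * r ^ i"
    using False assms by (intro mult_left_mono power_decreasing) auto
  then have "C * r ^ i \<le> ad * r ^ i"
    using assms by linarith
  then show ?thesis
    using assms by simp
qed

lemma max_term_not_off_extremes:
  fixes \<alpha> :: "nat \<Rightarrow> real" and r B :: real
  assumes "0 < r" "i \<le> d" "u \<le> d" "u \<notin> {0, i, d}"
    and max: "\<And>j. j \<le> d \<Longrightarrow> \<alpha> j * r ^ j \<le> \<alpha> u * r ^ u"
    and nonneg: "\<And>j. 0 \<le> \<alpha> j" and bound: "\<And>j. j \<le> d \<Longrightarrow> j \<noteq> i \<Longrightarrow> \<alpha> j \<le> B"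
    and pos0: "i \<noteq> 0 \<Longrightarrow> 0 < \<alpha> 0" and posd: "i \<noteq> d \<Longrightarrow> 0 < \<alpha> d"
    and large0: "i \<noteq> 0 \<Longrightarrow> B * (B / \<alpha> 0) ^ d < \<alpha> i"
    and larged: "i \<noteq> d \<Longrightarrow> B * (B / \<alpha> d) ^ d < \<alpha> i"
  shows False
proof -
  have "\<alpha> u * r ^ u \<le> B * r ^ u"
    using assms(3,4) bound[of u] \<open>0 < r\<close> by (intro mult_right_mono) auto
  then have below_u: "\<alpha> j * r ^ j \<le> B * r ^ u" if "j \<le> d" for j
    using max[OF that] by linarith
  show False
  proof (cases "u < i")
    case True
    then have "\<alpha> i \<le> B * (B / \<alpha> 0) ^ d"
      using below_u[of 0] below_u[of i] assms(2,4) pos0 bound[of 0] nonneg \<open>0 < r\<close>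
      by (intro dominated_coeff_le_below[where u = u]) auto
    then show False
      using large0 True by fastforce
  next
    case False
    then have "\<alpha> i \<le> B * (B / \<alpha> d) ^ d"
      using below_u[of d] below_u[of i] assms(2,3,4) posd bound[of d] \<open>0 < r\<close>
      by (intro dominated_coeff_le_above[where u = u]) auto
    then show False
      using larged False assms(3,4) by fastforce
  qed
qed

lemma max_term_not_tied_among_extremes:
  fixes \<alpha> :: "nat \<Rightarrow> real" and r B :: real
  assumes "0 < r" "0 < d" "i \<le> d" "B < \<alpha> i"
    and "m \<in> {0, i, d}" "l \<in> {0, i, d}" "m \<noteq> l" "\<alpha> m * r ^ m = \<alpha> l * r ^ l"
    and "\<alpha> i * r ^ i \<le> \<alpha> m * r ^ m"
    and nonneg: "\<And>j. 0 \<le> \<alpha> j" and bound: "\<And>j. j \<le> d \<Longrightarrow> j \<noteq> i \<Longrightarrow> \<alpha> j \<le> B"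
    and tie0: "i \<noteq> 0 \<Longrightarrow> \<alpha> 0 \<noteq> \<alpha> i * r ^ i"
    and tied: "i \<noteq> d \<Longrightarrow> \<alpha> i \<noteq> \<alpha> d * r ^ (d - i)"
  shows False
proof -
  consider "\<alpha> 0 = \<alpha> i * r ^ i" "i \<noteq> 0" | "\<alpha> i * r ^ i = \<alpha> d * r ^ d" "i \<noteq> d"
    | "\<alpha> i * r ^ i \<le> \<alpha> 0" "\<alpha> i * r ^ i \<le> \<alpha> d * r ^ d" "0 < i" "i < d"
    using assms(2,3,5-9) by (cases "i = 0"; cases "i = d") auto
  then show False
  proof cases
    case 1
    then show False
      using tie0 by simp
  next
    case 2
    then have "\<alpha> i * r ^ i = \<alpha> d * r ^ (d - i) * r ^ i"
      using \<open>i \<le> d\<close> by (simp add: mult.assoc power_add[symmetric])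
    then have "\<alpha> i = \<alpha> d * r ^ (d - i)"
      using \<open>0 < r\<close> by simp
    then show False
      using tied 2(2) by simp
  next
    case 3
    have "\<alpha> 0 \<le> B" "\<alpha> d \<le> B"
      using bound[of 0] bound[of d] 3(3,4) by simp_all
    then have "\<alpha> i \<le> B"
      using coeff_le_if_extremes_dominate[OF \<open>0 < r\<close> 3(3,4) nonneg[of i] nonneg[of d] _ _ 3(1,2)]
      by simp
    then show False
      using \<open>B < \<alpha> i\<close> by simp
  qed
qed

text \<open>This is the Newton polygon argument: the term of index i is too large to be
  matched by a term of index u \<notin> {0, i, d}, and the exponent conditions forbid a tie
  with the terms of index 0 and d.\<close>

lemma max_term_not_attained_twice:
  fixes \<alpha> :: "nat \<Rightarrow> real" and r B :: real
  assumes "0 < r" "0 < d" "i \<le> d"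
    and nonneg: "\<And>j. 0 \<le> \<alpha> j" and bound: "\<And>j. j \<le> d \<Longrightarrow> j \<noteq> i \<Longrightarrow> \<alpha> j \<le> B"
    and pos0: "i \<noteq> 0 \<Longrightarrow> 0 < \<alpha> 0" and posd: "i \<noteq> d \<Longrightarrow> 0 < \<alpha> d"
    and large0: "i \<noteq> 0 \<Longrightarrow> B * (B / \<alpha> 0) ^ d < \<alpha> i"
    and larged: "i \<noteq> d \<Longrightarrow> B * (B / \<alpha> d) ^ d < \<alpha> i"
    and tie0: "i \<noteq> 0 \<Longrightarrow> \<alpha> 0 \<noteq> \<alpha> i * r ^ i"
    and tied: "i \<noteq> d \<Longrightarrow> \<alpha> i \<noteq> \<alpha> d * r ^ (d - i)"
    and ml: "m \<le> d" "l \<le> d" "m \<noteq> l" "\<alpha> m * r ^ m = \<alpha> l * r ^ l"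
    and max: "\<And>j. j \<le> d \<Longrightarrow> \<alpha> j * r ^ j \<le> \<alpha> m * r ^ m"
  shows False
proof (cases "m \<in> {0, i, d} \<and> l \<in> {0, i, d}")
  case True
  obtain e where e: "e = 0 \<or> e = d" "e \<noteq> i"
    using \<open>0 < d\<close> by blast
  then have "B * 1 \<le> B * (B / \<alpha> e) ^ d"
    using pos0 posd bound[of e] by (intro mult_left_mono one_le_power) auto
  moreover have "B * (B / \<alpha> e) ^ d < \<alpha> i"
    using e large0 larged by auto
  ultimately have "B < \<alpha> i"
    by simp
  then show False
    using max_term_not_tied_among_extremes[of r d i B \<alpha> m l] True assms max[of i] by blast
next
  case False
  then obtain u where "u \<in> {m, l}" "u \<notin> {0, i, d}"
    by blast
  moreover have "\<alpha> j * r ^ j \<le> \<alpha> u * r ^ u" if "j \<le> d" for j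
    using max[OF that] ml(4) \<open>u \<in> {m, l}\<close> by auto
  ultimately show False
    using max_term_not_off_extremes[of r i d u \<alpha> B] assms ml(1,2) by blast
qed

locale nonarchimedean = absolute_value +
  assumes av_add_le_max: "av (x + y) \<le> max (av x) (av y)"
begin

lemma av_diff_le_max: "av (x - y) \<le> max (av x) (av y)"
  using av_add_le_max[of x "- y"] by simp

lemma av_add_eq_left: "av y < av x \<Longrightarrow> av (x + y) = av x"
  using av_add_le_max[of x y] av_add_le_max[of "x + y" "- y"] by auto

lemma av_sum_le_max:
  assumes "\<And>i. i \<in> A \<Longrightarrow> av (f i) \<le> M" "0 \<le> M"
  shows "av (\<Sum>i\<in>A. f i) \<le> M"
  using assms
proof (induction A rule: infinite_finite_induct)
  case (insert i A)
  have "av (f i) \<le> M" "av (sum f A) \<le> M"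
    using insert by simp_all
  then show ?case
    using av_add_le_max[of "f i" "sum f A"] insert(1,2) by simp
qed simp_all

lemma zero_sum_max_attained_twice:
  assumes "finite A" "a \<in> A" "b \<in> A" "a \<noteq> b" "(\<Sum>i\<in>A. f i) = 0"
  obtains m l where "m \<in> A" "l \<in> A" "m \<noteq> l" "av (f m) = av (f l)"
    "\<And>j. j \<in> A \<Longrightarrow> av (f j) \<le> av (f m)"
proof -
  have argmax: "\<exists>m\<in>S. \<forall>j\<in>S. av (f j) \<le> av (f m)" if "finite S" "S \<noteq> {}" for S
    using obtains_MAX[OF that, of "\<lambda>j. av (f j)"] that
    by (metis Max_ge finite_imageI image_eqI)
  obtain m where m: "m \<in> A" "\<And>j. j \<in> A \<Longrightarrow> av (f j) \<le> av (f m)"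
    using argmax[of A] assms by blast
  obtain l where l: "l \<in> A - {m}" "\<And>j. j \<in> A - {m} \<Longrightarrow> av (f j) \<le> av (f l)"
    using argmax[of "A - {m}"] assms by blast
  have "f m = - (\<Sum>i\<in>A - {m}. f i)"
    using assms(1,5) m(1) by (simp add: sum.remove eq_neg_iff_add_eq_0)
  moreover have "av (\<Sum>i\<in>A - {m}. f i) \<le> av (f l)"
    using l(2) av_nonneg by (intro av_sum_le_max) auto
  ultimately have "av (f m) \<le> av (f l)"
    by simp
  moreover have "av (f l) \<le> av (f m)"
    using m l by simp
  ultimately show ?thesis
    using that[of m l] m l by auto
qed

lemma av_power_diff_lt_1:
  assumes "av (y - z) < 1" "av y \<le> 1" "av z \<le> 1"
  shows "av (y ^ n - z ^ n) < 1"
proof (induction n)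
  case (Suc n)
  have "av y * av (y ^ n - z ^ n) \<le> 1 * av (y ^ n - z ^ n)"
    using assms av_nonneg by (intro mult_right_mono) auto
  then have "av (y * (y ^ n - z ^ n)) < 1"
    using Suc by (simp add: av_mult)
  moreover have "av (y - z) * av z ^ n \<le> av (y - z) * 1"
    using assms av_nonneg by (intro mult_left_mono power_le_one) auto
  then have "av ((y - z) * z ^ n) < 1"
    using assms by (simp add: av_mult av_power)
  moreover have "y ^ Suc n - z ^ Suc n = y * (y ^ n - z ^ n) + (y - z) * z ^ n"
    by (simp add: algebra_simps)
  ultimately show ?case
    using av_add_le_max[of "y * (y ^ n - z ^ n)" "(y - z) * z ^ n"] by simp
qed simp

lemma no_root_if_dominant_coeff:
  assumes "0 < d" "i \<le> d"
    and bound: "\<And>j. j \<le> d \<Longrightarrow> j \<noteq> i \<Longrightarrow> av (A j) \<le> B"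
    and A0: "i \<noteq> 0 \<Longrightarrow> A 0 \<noteq> 0" and Ad: "i \<noteq> d \<Longrightarrow> A d \<noteq> 0"
    and large0: "i \<noteq> 0 \<Longrightarrow> B * (B / av (A 0)) ^ d < av (A i)"
    and larged: "i \<noteq> d \<Longrightarrow> B * (B / av (A d)) ^ d < av (A i)"
    and tie0: "\<And>y. i \<noteq> 0 \<Longrightarrow> y \<noteq> 0 \<Longrightarrow> av (A 0) \<noteq> av (A i) * av y ^ i"
    and tied: "\<And>y. i \<noteq> d \<Longrightarrow> y \<noteq> 0 \<Longrightarrow> av (A i) \<noteq> av (A d) * av y ^ (d - i)"
  shows "(\<Sum>j\<le>d. A j * x ^ j) \<noteq> 0"
proof
  assume root: "(\<Sum>j\<le>d. A j * x ^ j) = 0"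
  have "x \<noteq> 0"
  proof
    assume "x = 0"
    then have "A 0 = 0"
      using root by (simp add: power_0_left if_distrib sum.delta cong: if_cong)
    moreover have "0 \<le> B * (B / av (A d)) ^ d" if "i \<noteq> d"
      using bound[of d] that av_nonneg[of "A d"] by simp
    ultimately show False
      using A0 larged \<open>0 < d\<close> by (cases "i = 0") force+
  qed
  obtain m l where "m \<le> d" "l \<le> d" "m \<noteq> l" "av (A m * x ^ m) = av (A l * x ^ l)"
    and "\<And>j. j \<le> d \<Longrightarrow> av (A j * x ^ j) \<le> av (A m * x ^ m)"
    by (rule zero_sum_max_attained_twice[of "{..d}" 0 d "\<lambda>j. A j * x ^ j"])
      (use root \<open>0 < d\<close> in auto)
  then show False
    using max_term_not_attained_twice[of "av x" d i "\<lambda>j. av (A j)" B m l] assms \<open>x \<noteq> 0\<close>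
    by (simp add: av_pos av_nonneg av_mult av_power)
qed

end

section \<open>The field Q_p\<close>

lemma exists_residue_dvd_diff:
  fixes a b m :: int
  assumes "coprime b m" "0 < m"
  obtains n where "0 \<le> n" "n < m" "m dvd a - n * b"
proof -
  obtain u v where uv: "u * b + v * m = 1"
    using bezout_int[of b m] assms(1) by auto
  define c where "c = (a * u) div m"
  define n where "n = (a * u) mod m"
  have n_eq: "n = a * u - m * c"
    unfolding n_def c_def by (simp add: minus_div_mult_eq_mod[symmetric] algebra_simps)
  have "a - n * b = a * (1 - u * b) + m * c * b"
    by (subst n_eq) (simp add: algebra_simps)
  also have "1 - u * b = v * m"
    using uv by linarith
  finally have "a - n * b = m * (a * v + c * b)"
    by (simp add: algebra_simps)
  then have "m dvd a - n * b"
    by simp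
  moreover have "0 \<le> n" "n < m"
    using assms(2) unfolding n_def by auto
  ultimately show ?thesis
    using that by blast
qed

locale padic_field =
  fixes p :: nat and av :: "'k::field_char_0 \<Rightarrow> real"
  assumes prime_p: "prime p" and is_Qp: "is_Qp p av"

sublocale padic_field \<subseteq> absolute_value av
  using is_Qp unfolding is_Qp_def by unfold_locales blast+

context padic_field
begin

lemma p_gt_1: "1 < p"
  using prime_p prime_gt_1_nat by blast

lemma av_of_rat: "av (of_rat q) = padic_abs_rat p q"
  using is_Qp unfolding is_Qp_def by blast

lemma exists_rat_close: "0 < e \<Longrightarrow> \<exists>q. av (x - of_rat q) < e"
  using is_Qp unfolding is_Qp_def by blast

lemma av_of_rat_nonzero: "q \<noteq> 0 \<Longrightarrow> av (of_rat q) = real p powi (- padic_val_rat p q)"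
  by (simp add: av_of_rat padic_abs_rat_def)

lemma av_of_int:
  "av (of_int m) = (if m = 0 then 0 else real p powi (- int (multiplicity (int p) m)))"
  using av_of_rat[of "of_int m"]
  by (simp add: padic_abs_rat_def padic_val_rat_def quotient_of_rat_of_int)

lemma av_of_int_le_1: "av (of_int m) \<le> 1"
  using p_gt_1 by (auto simp: av_of_int power_int_minus field_simps)

lemma av_of_int_eq_1: "\<not> int p dvd m \<Longrightarrow> av (of_int m) = 1"
  by (auto simp: av_of_int not_dvd_imp_multiplicity_0)

lemma av_of_int_eq_1_if_abs_less:
  assumes "m \<noteq> 0" "\<bar>m\<bar> < int p"
  shows "av (of_int m) = 1"
proof (rule av_of_int_eq_1)
  show "\<not> int p dvd m"
    using assms dvd_imp_le_int[of m "int p"] by auto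
qed

lemma av_of_int_le_inverse_p:
  assumes "int p dvd m"
  shows "av (of_int m) \<le> 1 / p"
proof (cases "m = 0")
  case False
  have "1 \<le> multiplicity (int p) m"
    using assms False prime_p
    by (metis dvd_imp_multiplicity_le multiplicity_self not_prime_0 not_prime_unit
        prime_nat_int_transfer)
  then have "real p powi (- int (multiplicity (int p) m)) \<le> real p powi (-1)"
    using p_gt_1 by (intro power_int_increasing) auto
  then show ?thesis
    using False by (simp add: av_of_int power_int_minus inverse_eq_divide)
qed (simp add: av_of_int)

lemma av_of_nat_mult_le: "av (of_nat n * x) \<le> av x"
  using av_of_int_le_1[of "int n"] av_nonneg[of x] av_nonneg[of "of_nat n"]
  by (simp add: av_mult mult_left_le_one_le)

lemma av_of_nat_p: "av (of_nat p) = 1 / p"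
  using av_of_int[of "int p"] prime_p p_gt_1 by (simp add: inverse_eq_divide)

end

sublocale padic_field \<subseteq> nonarchimedean av
  using ultrametric_if_of_nat_bounded av_of_int_le_1[of "int _"] by unfold_locales simp

context padic_field
begin

lemma power_int_p_inject: "real p powi a = real p powi b \<Longrightarrow> a = b"
  using p_gt_1 power_int_strict_increasing[of a b "real p"]
    power_int_strict_increasing[of b a "real p"]
  by (cases a b rule: linorder_cases) auto

lemma power_int_p_eq_imp_exponent_eq:
  assumes "real p powi a = real p powi b * (real p powi k) ^ m"
  shows "a = b + k * int m"
proof -
  have "real p powi a = real p powi (b + k * int m)"
    using assms p_gt_1 by (simp add: power_int_add power_int_power')
  then show ?thesis
    by (rule power_int_p_inject)
qed

text \<open>Q is dense and av (x + y) = av x once av y < av x, so every value is the value of a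
  rational number.\<close>

lemma av_eq_power_int:
  assumes "x \<noteq> 0"
  obtains k where "av x = real p powi k"
proof -
  obtain q where q: "av (x - of_rat q) < av x"
    using exists_rat_close av_pos[OF assms] by blast
  then have "av (x + (of_rat q - x)) = av x"
    by (intro av_add_eq_left) (simp add: av_minus_commute)
  then have "av (of_rat q) = av x"
    by simp
  moreover from this have "q \<noteq> 0"
    using assms av_eq_0_iff by force
  ultimately show ?thesis
    using that av_of_rat_nonzero by metis
qed

lemma power_int_ne_times_av_power:
  assumes "y \<noteq> 0" "\<not> int m dvd (e - N)"
  shows "real p powi e \<noteq> real p powi N * av y ^ m"
proof
  obtain k where "av y = real p powi k"
    using av_eq_power_int[OF assms(1)] .
  moreover assume "real p powi e = real p powi N * av y ^ m"
  ultimately have "e = N + k * int m"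
    by (simp add: power_int_p_eq_imp_exponent_eq)
  then show False
    using assms(2) by simp
qed

lemma exists_rat_av_eq_power_int: "\<exists>\<pi>. \<pi> \<noteq> 0 \<and> av (of_rat \<pi>) = real p powi k"
proof (cases "k \<ge> 0")
  case True
  have "av (of_rat ((1 / of_nat p) ^ nat k)) = real p powi k"
    using True av_of_nat_p p_gt_1
    by (simp add: of_rat_power of_rat_divide av_power av_divide power_int_def)
  then show ?thesis
    using p_gt_1 by (intro exI[of _ "(1 / of_nat p) ^ nat k"]) auto
next
  case False
  have "av (of_rat (of_nat p ^ nat (- k))) = real p powi k"
    using False av_of_nat_p
    by (simp add: of_rat_power av_power power_int_def power_one_over inverse_eq_divide)
  then show ?thesis
    using p_gt_1 by (intro exI[of _ "of_nat p ^ nat (- k)"]) auto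
qed

lemma not_dvd_denominator_if_av_le_1:
  assumes "av (of_rat q) \<le> 1" "quotient_of q = (a, b)"
  shows "\<not> int p dvd b"
proof
  assume "int p dvd b"
  moreover have "coprime a b"
    using assms(2) quotient_of_coprime by blast
  moreover have "\<not> is_unit (int p)"
    using p_gt_1 by simp
  ultimately have "\<not> int p dvd a"
    using coprime_common_divisor by blast
  then have "av (of_int a) = 1"
    by (rule av_of_int_eq_1)
  then have "av (of_rat q) = 1 / av (of_int b)"
    using quotient_of_div[OF assms(2)] by (simp add: of_rat_divide av_divide)
  moreover have "0 < av (of_int b)" "av (of_int b) \<le> 1 / p"
    using \<open>int p dvd b\<close> assms(2) quotient_of_denom_pos av_pos av_of_int_le_inverse_p by force+
  ultimately have "real p \<le> av (of_rat q)"
    using p_gt_1 by (simp add: le_divide_eq mult.commute)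
  then show False
    using assms(1) p_gt_1 by simp
qed

lemma exists_residue:
  assumes "av y \<le> 1"
  obtains n where "n < p" "av (y - of_nat n) < 1"
proof -
  obtain q where q: "av (y - of_rat q) < 1"
    using exists_rat_close[of 1] by auto
  have "av (of_rat q) \<le> 1"
    using av_diff_le_max[of y "y - of_rat q"] q assms by simp
  obtain a b where ab: "quotient_of q = (a, b)"
    by (cases "quotient_of q")
  have "\<not> int p dvd b"
    using not_dvd_denominator_if_av_le_1[OF \<open>av (of_rat q) \<le> 1\<close> ab] .
  then have "coprime b (int p)"
    using prime_p by (metis coprime_commute prime_imp_coprime prime_nat_int_transfer)
  then obtain n where n: "0 \<le> n" "n < int p" "int p dvd a - n * b"
    using exists_residue_dvd_diff[of b "int p" a] p_gt_1 by auto
  have "(of_rat q :: 'k) = of_int a / of_int b"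
    using quotient_of_div[OF ab] by (simp add: of_rat_divide)
  then have "(of_rat q :: 'k) - of_int n = of_int (a - n * b) / of_int b"
    using quotient_of_denom_pos[OF ab] by (simp add: field_simps)
  then have "av (of_rat q - of_int n) = av (of_int (a - n * b))"
    using av_of_int_eq_1[OF \<open>\<not> int p dvd b\<close>] by (simp add: av_divide)
  also have "\<dots> < 1"
    using av_of_int_le_inverse_p[OF n(3)] p_gt_1
    by (smt (verit) divide_less_eq_1_pos of_nat_1 of_nat_less_iff)
  finally have "av (y - of_int n) < 1"
    using av_add_le_max[of "y - of_rat q" "of_rat q - of_int n"] q by simp
  then show ?thesis
    using that[of "nat n"] n by simp
qed

end

section \<open>Rootless completions\<close>

lemma exists_int_off_residue:
  fixes m B N0 :: int
  assumes "2 \<le> m"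
  shows "\<exists>N\<ge>N0. \<not> m dvd (N - B)"
proof -
  define t where "t = \<bar>N0\<bar> + \<bar>B\<bar>"
  have "1 * t \<le> m * t"
    using assms unfolding t_def by (intro mult_right_mono) auto
  then have "N0 \<le> B + 1 + t * m"
    unfolding t_def by (simp add: mult.commute)
  moreover have "\<not> m dvd (B + 1 + t * m - B)"
    using assms zdvd_imp_le[of m 1] by auto
  ultimately show ?thesis
    by blast
qed

text \<open>Take X \<equiv> A + 1 (mod m1) and a step \<delta> with X + \<delta> \<noteq> A (mod m1) and m2 \<nmid> \<delta>;
  then X or X + \<delta> avoids B modulo m2.\<close>

lemma exists_int_off_two_residues:
  fixes m1 m2 A B N0 :: int
  assumes "2 \<le> m1" "2 \<le> m2" "5 \<le> m1 + m2"
  shows "\<exists>N\<ge>N0. \<not> m1 dvd (A - N) \<and> \<not> m2 dvd (N - B)"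
proof -
  define \<delta> where "\<delta> = (if m2 dvd m1 then 1 else m1)"
  have "\<not> m2 dvd \<delta>"
    using assms zdvd_imp_le[of m2 1] unfolding \<delta>_def by auto
  have "\<not> m1 dvd (1 + \<delta>)"
  proof (cases "m2 dvd m1")
    case True
    then have "m2 \<le> m1"
      using assms by (intro zdvd_imp_le) auto
    then show ?thesis
      using True assms zdvd_imp_le[of m1 2] unfolding \<delta>_def by auto
  next
    case False
    then show ?thesis
      using assms zdvd_imp_le[of m1 1] unfolding \<delta>_def by auto
  qed
  have "0 < \<delta>"
    using assms unfolding \<delta>_def by auto
  define t where "t = \<bar>N0\<bar> + \<bar>A\<bar>"
  define X where "X = A + 1 + t * m1"
  have "1 * t \<le> m1 * t"
    using assms unfolding t_def by (intro mult_right_mono) auto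
  then have "N0 \<le> X"
    unfolding X_def t_def by (simp add: mult.commute)
  have "\<not> m1 dvd 1"
    using assms zdvd_imp_le[of m1 1] by auto
  moreover have "A - X = - (1 + t * m1)"
    unfolding X_def by simp
  ultimately have off_X: "\<not> m1 dvd (A - X)"
    by (simp only: dvd_minus_iff dvd_add_times_triv_right_iff simp_thms)
  have "A - (X + \<delta>) = - ((1 + \<delta>) + t * m1)"
    unfolding X_def by simp
  with \<open>\<not> m1 dvd (1 + \<delta>)\<close> have off_X\<delta>: "\<not> m1 dvd (A - (X + \<delta>))"
    by (simp only: dvd_minus_iff dvd_add_times_triv_right_iff simp_thms)
  show ?thesis
  proof (cases "m2 dvd (X - B)")
    case True
    then have "\<not> m2 dvd (X + \<delta> - B)"
      using \<open>\<not> m2 dvd \<delta>\<close> by (metis add_diff_cancel_left' diff_add_eq dvd_diff)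
    then show ?thesis
      using \<open>N0 \<le> X\<close> \<open>0 < \<delta>\<close> off_X\<delta> by (intro exI[of _ "X + \<delta>"]) auto
  next
    case False
    then show ?thesis
      using \<open>N0 \<le> X\<close> off_X by blast
  qed
qed

lemma exists_exponent_off_residues:
  fixes e0 ed N0 :: int
  assumes "2 \<le> d" "i = 0 \<or> i = d \<or> (5 \<le> d \<and> 2 \<le> i \<and> i + 2 \<le> d)"
  shows "\<exists>N\<ge>N0. (i \<noteq> 0 \<longrightarrow> \<not> int i dvd (e0 - N)) \<and> (i \<noteq> d \<longrightarrow> \<not> int (d - i) dvd (N - ed))"
  using assms(2)
proof (elim disjE)
  assume "i = 0"
  then show ?thesis
    using exists_int_off_residue[of "int d" N0 ed] assms(1) by auto
next
  assume "i = d"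
  then show ?thesis
    using exists_int_off_residue[of "int d" N0 e0] assms(1) by (auto simp: dvd_diff_commute)
next
  assume "5 \<le> d \<and> 2 \<le> i \<and> i + 2 \<le> d"
  then show ?thesis
    using exists_int_off_two_residues[of "int i" "int (d - i)" N0 e0 ed] by auto
qed

lemma sum_trinomial:
  fixes A :: "nat \<Rightarrow> 'a::comm_ring_1"
  assumes "0 < i" "i < d" "\<And>j. 0 < j \<Longrightarrow> j < d \<Longrightarrow> j \<noteq> i \<Longrightarrow> A j = 0"
  shows "(\<Sum>j\<le>d. A j * x ^ j) = A 0 + A i * x ^ i + A d * x ^ d"
proof -
  have "(\<Sum>j\<le>d. A j * x ^ j) = (\<Sum>j\<in>{0, i, d}. A j * x ^ j)"
    using assms by (intro sum.mono_neutral_right) auto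
  then show ?thesis
    using assms(1,2) by (simp add: algebra_simps)
qed

context padic_field
begin

text \<open>c has absolute value p^N with N huge and outside the residue classes modulo i and d - i
  that would let the term c x^i tie with a_0 or with a_d x^d.\<close>

lemma exists_large_rat_off_value_powers:
  assumes "2 \<le> d" "i = 0 \<or> i = d \<or> (5 \<le> d \<and> 2 \<le> i \<and> i + 2 \<le> d)"
  obtains c where "c \<noteq> 0" "K < av (of_rat c)"
    "\<forall>y. y \<noteq> 0 \<longrightarrow> i \<noteq> 0 \<longrightarrow> real p powi e\<^sub>0 \<noteq> av (of_rat c) * av y ^ i"
    "\<forall>y. y \<noteq> 0 \<longrightarrow> i \<noteq> d \<longrightarrow> av (of_rat c) \<noteq> real p powi e\<^sub>d * av y ^ (d - i)"
proof -
  obtain n where n: "K < real p ^ n"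
    using real_arch_pow p_gt_1 by (metis of_nat_1 of_nat_less_iff)
  obtain N where N: "int n \<le> N" "i \<noteq> 0 \<longrightarrow> \<not> int i dvd (e\<^sub>0 - N)"
    "i \<noteq> d \<longrightarrow> \<not> int (d - i) dvd (N - e\<^sub>d)"
    using exists_exponent_off_residues[OF assms, of "int n" e\<^sub>0 e\<^sub>d] by auto
  obtain c where c: "c \<noteq> 0" "av (of_rat c) = real p powi N"
    using exists_rat_av_eq_power_int by blast
  have "real p ^ n \<le> real p powi N"
    using N(1) p_gt_1 power_int_increasing[of "int n" N "real p"] by simp
  then show ?thesis
    using that[OF c(1)] n c(2) N(2,3) power_int_ne_times_av_power by fastforce
qed

lemma exists_rootless_completion_dominant:
  fixes a :: "nat \<Rightarrow> rat"
  assumes "2 \<le> d" "i = 0 \<or> i = d \<or> (5 \<le> d \<and> 2 \<le> i \<and> i + 2 \<le> d)"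
    and a0: "i \<noteq> 0 \<Longrightarrow> a 0 \<noteq> 0" and ad: "i \<noteq> d \<Longrightarrow> a d \<noteq> 0"
  shows "\<exists>c. c \<noteq> 0 \<and> (\<forall>x :: 'k. (\<Sum>j\<le>d. of_rat ((a(i := c)) j) * x ^ j) \<noteq> 0)"
proof -
  define \<alpha> where "\<alpha> j = av (of_rat (a j))" for j
  define B where "B = 1 + (\<Sum>j\<le>d. \<alpha> j)"
  have \<alpha>_le_B: "\<alpha> j \<le> B" if "j \<le> d" for j
    using that av_nonneg member_le_sum[of j "{..d}" \<alpha>] unfolding B_def \<alpha>_def by simp
  have "0 \<le> B"
    using \<alpha>_le_B[of 0] av_nonneg[of "of_rat (a 0)"] unfolding \<alpha>_def by linarith
  then have "0 \<le> B * (B / \<alpha> j) ^ d" for j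
    using av_nonneg unfolding \<alpha>_def by simp
  obtain c where c: "c \<noteq> 0" "B * (B / \<alpha> 0) ^ d + B * (B / \<alpha> d) ^ d < av (of_rat c)"
    "\<forall>y. y \<noteq> 0 \<longrightarrow> i \<noteq> 0 \<longrightarrow> real p powi (- padic_val_rat p (a 0)) \<noteq> av (of_rat c) * av y ^ i"
    "\<forall>y. y \<noteq> 0 \<longrightarrow> i \<noteq> d \<longrightarrow> av (of_rat c) \<noteq> real p powi (- padic_val_rat p (a d)) * av y ^ (d - i)"
    by (rule exists_large_rat_off_value_powers[OF assms(1,2),
          where K = "B * (B / \<alpha> 0) ^ d + B * (B / \<alpha> d) ^ d"
          and e\<^sub>0 = "- padic_val_rat p (a 0)" and e\<^sub>d = "- padic_val_rat p (a d)"])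
  have "(\<Sum>j\<le>d. of_rat ((a(i := c)) j) * x ^ j) \<noteq> 0" for x :: 'k
  proof (rule no_root_if_dominant_coeff[where B = B])
    show "0 < d" "i \<le> d"
      using assms(1,2) by auto
    show "av (of_rat ((a(i := c)) j)) \<le> B" if "j \<le> d" "j \<noteq> i" for j
      using that \<alpha>_le_B unfolding \<alpha>_def by simp
    show "(of_rat ((a(i := c)) 0) :: 'k) \<noteq> 0" if "i \<noteq> 0"
      using that a0 by simp
    show "(of_rat ((a(i := c)) d) :: 'k) \<noteq> 0" if "i \<noteq> d"
      using that ad by simp
    show "B * (B / av (of_rat ((a(i := c)) 0))) ^ d < av (of_rat ((a(i := c)) i))" if "i \<noteq> 0"
      using that c(2) \<open>0 \<le> B * (B / \<alpha> d) ^ d\<close> unfolding \<alpha>_def by simp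
    show "B * (B / av (of_rat ((a(i := c)) d))) ^ d < av (of_rat ((a(i := c)) i))" if "i \<noteq> d"
      using that c(2) \<open>0 \<le> B * (B / \<alpha> 0) ^ d\<close> unfolding \<alpha>_def by simp
    show "av (of_rat ((a(i := c)) 0)) \<noteq> av (of_rat ((a(i := c)) i)) * av y ^ i"
      if "i \<noteq> 0" "y \<noteq> 0" for y :: 'k
      using that c(3) a0 av_of_rat_nonzero by simp
    show "av (of_rat ((a(i := c)) i)) \<noteq> av (of_rat ((a(i := c)) d)) * av y ^ (d - i)"
      if "i \<noteq> d" "y \<noteq> 0" for y :: 'k
      using that c(4) ad av_of_rat_nonzero by simp
  qed
  then show ?thesis
    using c(1) by blast
qed

text \<open>For each n \<noteq> 0 the values G n + C n^i (C < p) are pairwise incongruent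
  modulo the maximal ideal, so at most one C makes G n + C n^i a non-unit; there are p
  choices of C but only p - 1 residues n.\<close>

lemma exists_shift_avoiding_nonunits:
  fixes G :: "nat \<Rightarrow> 'k"
  obtains C where "C < p" "\<And>n. 0 < n \<Longrightarrow> n < p \<Longrightarrow> 1 \<le> av (G n + of_nat C * of_nat n ^ i)"
proof -
  have "\<exists>C<p. \<forall>n. 0 < n \<and> n < p \<longrightarrow> 1 \<le> av (G n + of_nat C * of_nat n ^ i)"
  proof (rule ccontr)
    assume "\<not> ?thesis"
    then obtain g where g: "\<And>C. C < p \<Longrightarrow>
        0 < g C \<and> g C < p \<and> av (G (g C) + of_nat C * of_nat (g C) ^ i) < 1"
      by (metis not_le)
    have "g ` {..<p} \<subseteq> {1..<p}"
      using g by (auto simp: Suc_le_eq)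
    then have "\<not> inj_on g {..<p}"
      using card_inj_on_le[of g "{..<p}" "{1..<p}"] p_gt_1 by fastforce
    then obtain C1 C2 where C: "C1 < p" "C2 < p" "C1 \<noteq> C2" "g C1 = g C2"
      unfolding inj_on_def by blast
    define n where "n = g C1"
    have "av (G n + of_nat C1 * of_nat n ^ i) < 1" "av (G n + of_nat C2 * of_nat n ^ i) < 1"
      using g[OF C(1)] g[OF C(2)] C(4) unfolding n_def by simp_all
    then have "av ((G n + of_nat C1 * of_nat n ^ i) - (G n + of_nat C2 * of_nat n ^ i)) < 1"
      using av_diff_le_max[of "G n + of_nat C1 * of_nat n ^ i" "G n + of_nat C2 * of_nat n ^ i"]
      by (meson le_less_trans max_less_iff_conj)
    moreover have "(G n + of_nat C1 * of_nat n ^ i) - (G n + of_nat C2 * of_nat n ^ i)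
        = of_int (int C1 - int C2) * of_int (int n) ^ i"
      by (simp add: algebra_simps)
    moreover have "av (of_nat C1 - of_nat C2) = 1"
      using av_of_int_eq_1_if_abs_less[of "int C1 - int C2"] C(1-3) by simp
    moreover have "av (of_nat n) = 1"
      using av_of_int_eq_1_if_abs_less[of "int n"] g[OF C(1)] unfolding n_def by simp
    ultimately show False
      by (simp add: av_mult av_power)
  qed
  then show ?thesis
    using that by blast
qed

lemma no_root_unit_trinomial_off_units:
  assumes b: "av b = 1" and i: "0 < i" "i < d" and y: "av y \<noteq> 1"
  shows "1 + of_nat C * y ^ i + b * y ^ d \<noteq> 0"
proof (cases "av y < 1")
  case True
  then have "av y ^ i < 1" "av y ^ d < 1"
    using i av_nonneg[of y] by (simp_all add: power_less_one_iff)
  then have "av (of_nat C * y ^ i) < 1" "av (b * y ^ d) < 1"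
    using av_of_nat_mult_le[of C "y ^ i"] b by (simp_all add: av_mult av_power)
  then have "av (of_nat C * y ^ i + b * y ^ d) < av 1"
    using av_add_le_max[of "of_nat C * y ^ i" "b * y ^ d"] by simp
  then have "av (1 + (of_nat C * y ^ i + b * y ^ d)) = 1"
    using av_add_eq_left by simp
  then show ?thesis
    by (auto simp: add.assoc)
next
  case False
  then have "1 < av y"
    using y by simp
  have "av (1 + of_nat C * y ^ i) \<le> max (av 1) (av (of_nat C * y ^ i))"
    by (rule av_add_le_max)
  also have "\<dots> \<le> av y ^ i"
    using av_of_nat_mult_le[of C "y ^ i"] \<open>1 < av y\<close> by (simp add: av_power one_le_power)
  also have "\<dots> < av (b * y ^ d)"
    using \<open>1 < av y\<close> i b by (simp add: av_mult av_power power_strict_increasing)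
  finally have "av (b * y ^ d + (1 + of_nat C * y ^ i)) = av (b * y ^ d)"
    by (rule av_add_eq_left)
  moreover have "0 < av (b * y ^ d)"
    using b \<open>1 < av y\<close> by (simp add: av_mult av_power)
  ultimately show ?thesis
    by (auto simp: algebra_simps)
qed

lemma no_root_unit_trinomial_on_units:
  assumes b: "av b = 1" and y: "av y = 1"
    and units: "\<And>n. 0 < n \<Longrightarrow> n < p \<Longrightarrow> 1 \<le> av (1 + b * of_nat n ^ d + of_nat C * of_nat n ^ i)"
  shows "1 + of_nat C * y ^ i + b * y ^ d \<noteq> 0"
proof -
  obtain n where n: "n < p" "av (y - of_nat n) < 1"
    using exists_residue y by (metis order_refl)
  have "n \<noteq> 0"
    using n(2) y by (intro notI) simp
  define Fy where "Fy = 1 + of_nat C * y ^ i + b * y ^ d"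
  define Fn where "Fn = 1 + b * of_nat n ^ d + of_nat C * of_nat n ^ i"
  have "1 \<le> av Fn"
    using units n \<open>n \<noteq> 0\<close> unfolding Fn_def by auto
  have close: "av (y ^ j - of_nat n ^ j) < 1" for j
    using av_power_diff_lt_1[OF n(2)] y av_of_int_le_1[of "int n"] by simp
  have "av (of_nat C * (y ^ i - of_nat n ^ i)) < 1"
    using av_of_nat_mult_le[of C "y ^ i - of_nat n ^ i"] close[of i] by linarith
  moreover have "av (b * (y ^ d - of_nat n ^ d)) < 1"
    using close[of d] b by (simp add: av_mult)
  moreover have "Fy - Fn = of_nat C * (y ^ i - of_nat n ^ i) + b * (y ^ d - of_nat n ^ d)"
    unfolding Fy_def Fn_def by (simp add: algebra_simps)
  ultimately have "av (Fy - Fn) < av Fn"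
    using av_add_le_max[of "of_nat C * (y ^ i - of_nat n ^ i)" "b * (y ^ d - of_nat n ^ d)"]
      \<open>1 \<le> av Fn\<close> by simp
  then have "av (Fn + (Fy - Fn)) = av Fn"
    by (rule av_add_eq_left)
  then have "av Fy \<noteq> 0"
    using \<open>1 \<le> av Fn\<close> by simp
  then show ?thesis
    unfolding Fy_def by auto
qed

lemma no_root_binomial:
  assumes "0 < d" "b \<noteq> 0" "av a = av b * real p powi e" "\<not> int d dvd e"
  shows "a + b * x ^ d \<noteq> 0"
proof
  assume "a + b * x ^ d = 0"
  then have "b * x ^ d = - a"
    by (simp add: eq_neg_iff_add_eq_0 add.commute)
  then have "av b * av x ^ d = av a"
    by (metis av_minus av_mult av_power)
  moreover have "x \<noteq> 0"
    using calculation assms(1-3) av_pos[of b] p_gt_1 by (auto simp: zero_power)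
  ultimately show False
    using power_int_ne_times_av_power[of x d e 0] assms(2-4) av_pos[of b] by simp
qed

text \<open>Substituting x = \<pi> y turns the trinomial into a0 (1 + C y^i + b y^d) with av b = 1.\<close>

lemma exists_rootless_trinomial_scaled:
  fixes a0 ad \<pi> :: rat
  assumes i: "0 < i" "i < d" and "a0 \<noteq> 0" "\<pi> \<noteq> 0"
    and "av (of_rat a0) = av (of_rat ad) * av (of_rat \<pi>) ^ d"
  shows "\<exists>c. \<forall>x :: 'k. of_rat a0 + of_rat c * x ^ i + of_rat ad * x ^ d \<noteq> 0"
proof -
  define b where "b = ad * \<pi> ^ d / a0"
  have "av (of_rat \<pi>) \<noteq> 0"
    using \<open>\<pi> \<noteq> 0\<close> by (simp add: av_eq_0_iff)
  moreover have "av (of_rat ad) \<noteq> 0"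
    using assms av_pos[of "of_rat a0"] by auto
  ultimately have "av (of_rat b) = 1"
    unfolding b_def using assms
    by (simp add: of_rat_mult of_rat_divide of_rat_power av_mult av_divide av_power)
  obtain C where C: "C < p" "\<And>n. 0 < n \<Longrightarrow> n < p \<Longrightarrow>
      1 \<le> av ((1 + of_rat b * of_nat n ^ d) + of_nat C * (of_nat n :: 'k) ^ i)"
    using exists_shift_avoiding_nonunits[of "\<lambda>n. 1 + of_rat b * of_nat n ^ d" i] by blast
  have "of_rat a0 + of_rat (of_nat C * a0 / \<pi> ^ i) * x ^ i + of_rat ad * x ^ d \<noteq> 0" for x :: 'k
  proof -
    define y where "y = x / of_rat \<pi>"
    have "x = of_rat \<pi> * y"
      unfolding y_def using \<open>\<pi> \<noteq> 0\<close> by simp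
    then have "of_rat a0 + of_rat (of_nat C * a0 / \<pi> ^ i) * x ^ i + of_rat ad * x ^ d
        = of_rat a0 * (1 + of_nat C * y ^ i + of_rat b * y ^ d)"
      unfolding b_def using \<open>\<pi> \<noteq> 0\<close> \<open>a0 \<noteq> 0\<close>
      by (simp add: of_rat_mult of_rat_divide of_rat_power power_mult_distrib field_simps)
    moreover have "1 + of_nat C * y ^ i + of_rat b * y ^ d \<noteq> 0"
      using no_root_unit_trinomial_off_units[OF \<open>av (of_rat b) = 1\<close> i]
        no_root_unit_trinomial_on_units[OF \<open>av (of_rat b) = 1\<close> _ C(2)] by blast
    ultimately show ?thesis
      using \<open>a0 \<noteq> 0\<close> by simp
  qed
  then show ?thesis
    by blast
qed

text \<open>If av (a0 / ad) is not the d-th power of a value, already c = 0 works.\<close>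

lemma exists_rootless_trinomial:
  fixes a0 ad :: rat
  assumes i: "0 < i" "i < d" and "a0 \<noteq> 0" "ad \<noteq> 0"
  shows "\<exists>c. \<forall>x :: 'k. of_rat a0 + of_rat c * x ^ i + of_rat ad * x ^ d \<noteq> 0"
proof -
  obtain e where "av (of_rat (a0 / ad)) = real p powi e"
    using av_of_rat_nonzero assms by fastforce
  then have av_a0: "av (of_rat a0) = av (of_rat ad) * real p powi e"
    using av_pos[of "of_rat ad"] \<open>ad \<noteq> 0\<close> by (simp add: of_rat_divide av_divide field_simps)
  show ?thesis
  proof (cases "int d dvd e")
    case False
    then have "of_rat a0 + of_rat 0 * x ^ i + of_rat ad * x ^ d \<noteq> 0" for x :: 'k
      using no_root_binomial[of d "of_rat ad" "of_rat a0" e x] av_a0 i \<open>ad \<noteq> 0\<close> by simp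
    then show ?thesis
      by blast
  next
    case True
    then obtain k where "e = int d * k"
      by blast
    moreover obtain \<pi> where "\<pi> \<noteq> 0" "av (of_rat \<pi>) = real p powi k"
      using exists_rat_av_eq_power_int by blast
    ultimately show ?thesis
      using exists_rootless_trinomial_scaled[OF i \<open>a0 \<noteq> 0\<close>, of \<pi> ad] av_a0
      by (simp add: power_int_power' mult.commute)
  qed
qed

lemma exists_rootless_completion:
  fixes a :: "nat \<Rightarrow> rat"
  assumes "2 \<le> d" and a0: "i \<noteq> 0 \<Longrightarrow> a 0 \<noteq> 0" and ad: "i \<noteq> d \<Longrightarrow> a d \<noteq> 0"
    and "i = 0 \<or> i = d \<or> (5 \<le> d \<and> 2 \<le> i \<and> i + 2 \<le> d) \<or>
      (0 < i \<and> i < d \<and> (\<forall>j. 0 < j \<and> j < d \<and> j \<noteq> i \<longrightarrow> a j = 0))"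
  shows "\<exists>c. (i = 0 \<or> i = d \<longrightarrow> c \<noteq> 0) \<and>
    (\<forall>x :: 'k. (\<Sum>j\<le>d. of_rat ((a(i := c)) j) * x ^ j) \<noteq> 0)"
proof (cases "i = 0 \<or> i = d \<or> (5 \<le> d \<and> 2 \<le> i \<and> i + 2 \<le> d)")
  case True
  then show ?thesis
    using exists_rootless_completion_dominant[OF assms(1) True a0 ad] by blast
next
  case False
  then have i: "0 < i" "i < d" and zero: "\<And>j. 0 < j \<Longrightarrow> j < d \<Longrightarrow> j \<noteq> i \<Longrightarrow> a j = 0"
    using assms(4) by auto
  obtain c where c: "\<forall>x :: 'k. of_rat (a 0) + of_rat c * x ^ i + of_rat (a d) * x ^ d \<noteq> 0"
    using exists_rootless_trinomial[OF i a0 ad] i by auto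
  have "(\<Sum>j\<le>d. of_rat ((a(i := c)) j) * x ^ j)
      = of_rat (a 0) + of_rat c * x ^ i + of_rat (a d) * (x :: 'k) ^ d" for x
    using sum_trinomial[OF i, of "\<lambda>j. of_rat ((a(i := c)) j)"] zero i by simp
  then have "\<forall>x :: 'k. (\<Sum>j\<le>d. of_rat ((a(i := c)) j) * x ^ j) \<noteq> 0"
    using c by simp
  then show ?thesis
    using i by blast
qed

end

section \<open>The game\<close>

lemma can_force_by_invariant:
  assumes own_move: "\<And>k s. Inv (Suc k) s \<Longrightarrow> odd (Suc k) \<Longrightarrow>
      \<exists>i c. legal_move d s i c \<and> Inv k (s(i := Some c))"
    and other_move: "\<And>k s i c. Inv (Suc k) s \<Longrightarrow> even (Suc k) \<Longrightarrow> legal_move d s i c \<Longrightarrow>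
      Inv k (s(i := Some c))"
    and final: "\<And>s. Inv 0 s \<Longrightarrow> G s"
  shows "Inv k s \<Longrightarrow> can_force d G (odd k) k s"
proof (induction k arbitrary: s)
  case 0
  then show ?case
    using final by simp
next
  case (Suc k)
  show ?case
  proof (cases "odd (Suc k)")
    case True
    then obtain i c where "legal_move d s i c" "Inv k (s(i := Some c))"
      using own_move Suc.prems by blast
    then show ?thesis
      using Suc.IH True by auto
  next
    case False
    then show ?thesis
      using Suc.IH other_move[OF Suc.prems] by auto
  qed
qed

definition free_indices :: "nat \<Rightarrow> position \<Rightarrow> nat set" where
  "free_indices d s = {j. j \<le> d \<and> s j = None}"

definition proper_position :: "nat \<Rightarrow> nat \<Rightarrow> position \<Rightarrow> bool" where
  "proper_position d k s \<longleftrightarrow> card (free_indices d s) = k \<and> s 0 \<noteq> Some 0 \<and> s d \<noteq> Some 0"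

lemma finite_free_indices [simp]: "finite (free_indices d s)"
  unfolding free_indices_def by auto

lemma free_indices_move:
  "legal_move d s j c \<Longrightarrow> free_indices d (s(j := Some c)) = free_indices d s - {j}"
  unfolding free_indices_def legal_move_def by auto

lemma free_indices_start: "free_indices d (\<lambda>_. None) = {..d}"
  unfolding free_indices_def by auto

lemma proper_position_start: "proper_position d (d + 1) (\<lambda>_. None)"
  unfolding proper_position_def free_indices_start by simp

lemma proper_position_move:
  assumes "proper_position d (Suc k) s" "legal_move d s j c"
  shows "proper_position d k (s(j := Some c))"
proof -
  have "j \<in> free_indices d s"
    using assms(2) unfolding free_indices_def legal_move_def by simp
  then have "card (free_indices d (s(j := Some c))) = k"
    using assms(1) unfolding free_indices_move[OF assms(2)] proper_position_def by simp
  then show ?thesis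
    using assms unfolding proper_position_def legal_move_def by auto
qed

lemma exists_legal_move:
  assumes "proper_position d (Suc k) s"
  obtains j where "legal_move d s j 1"
proof -
  have "card (free_indices d s) \<noteq> 0"
    using assms unfolding proper_position_def by simp
  then obtain j where "j \<in> free_indices d s"
    by (metis card.empty ex_in_conv)
  then show ?thesis
    using that[of j] unfolding free_indices_def legal_move_def by simp
qed

lemma free_indices_eq_singleton:
  assumes "free_indices d s = {i}"
  shows "i \<le> d" "s i = None" "\<And>j. j \<le> d \<Longrightarrow> j \<noteq> i \<Longrightarrow> s j \<noteq> None"
proof -
  have "i \<in> free_indices d s"
    using assms by simp
  then show "i \<le> d" "s i = None"
    unfolding free_indices_def by simp_all
  show "s j \<noteq> None" if "j \<le> d" "j \<noteq> i" for j
  proof -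
    have "j \<notin> free_indices d s"
      using that assms by simp
    then show ?thesis
      using that unfolding free_indices_def by simp
  qed
qed

lemma proper_position_last:
  assumes "proper_position d (Suc 0) s"
  obtains i where "free_indices d s = {i}"
proof -
  have "card (free_indices d s) = 1"
    using assms unfolding proper_position_def by simp
  then show ?thesis
    using that card_1_singletonE by blast
qed

lemma poly_final_poly:
  "poly (map_poly of_rat (final_poly d s)) (x :: 'k :: field_char_0)
    = (\<Sum>j\<le>d. of_rat (the (s j)) * x ^ j)"
proof -
  have "map_poly of_rat (final_poly d s) = (\<Sum>j\<le>d. monom (of_rat (the (s j)) :: 'k) j)"
    by (rule poly_eqI)
      (simp add: final_poly_def coeff_map_poly coeff_sum of_rat_sum coeff_monom if_distrib
        cong: if_cong)
  then show ?thesis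
    by (simp add: poly_sum poly_monom)
qed

lemma of_nat_mem_unital_subring:
  assumes "unital_subring D"
  shows "of_nat n \<in> D"
proof (induction n)
  case 0
  have "1 - 1 \<in> D"
    using assms unfolding unital_subring_def by blast
  then show ?case
    by simp
next
  case (Suc n)
  have "1 - 1 - 1 \<in> D"
    using assms unfolding unital_subring_def by blast
  then have "of_nat n - (1 - 1 - 1) \<in> D"
    using Suc assms unfolding unital_subring_def by blast
  then show ?case
    by (simp add: algebra_simps)
qed

lemma exists_pos_nat_not_root:
  fixes R :: "'a::{field_char_0} poly"
  assumes "R \<noteq> 0"
  obtains n :: nat where "0 < n" "poly R (of_nat n) \<noteq> 0"
proof -
  have "finite (of_nat -` {x. poly R x = 0} :: nat set)"
    using poly_roots_finite[OF assms] by (intro finite_vimageI) (auto simp: inj_on_def)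
  then obtain n :: nat where "n \<notin> insert 0 (of_nat -` {x. poly R x = 0})"
    using ex_new_if_finite[OF infinite_UNIV_nat] by blast
  then have "0 < n" "poly R (of_nat n) \<noteq> 0"
    by auto
  then show ?thesis
    by (rule that)
qed

lemma wanda_last_move:
  fixes D :: "'k::field_char_0 set"
  assumes "0 < d" "proper_position d (Suc 0) s" "unital_subring D"
  shows "\<exists>i c. legal_move d s i c \<and> wanda_goal d D (s(i := Some c))"
proof -
  obtain i where free: "free_indices d s = {i}"
    by (rule proper_position_last[OF assms(2)])
  note i = free_indices_eq_singleton[OF free]
  define R where "R = (\<Sum>j\<in>{..d} - {i}. monom (the (s j)) j)"
  define e where "e = (if i = 0 then d else 0)"
  have "e \<le> d" "e \<noteq> i"
    using assms(1) unfolding e_def by auto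
  then have "the (s e) \<noteq> 0"
    using i(3)[of e] assms(2) unfolding proper_position_def e_def by (auto split: if_splits)
  moreover have "coeff R e = the (s e)"
    unfolding R_def using \<open>e \<le> d\<close> \<open>e \<noteq> i\<close> by (simp add: coeff_sum coeff_monom)
  ultimately have "R \<noteq> 0"
    by auto
  then obtain n :: nat where n: "0 < n" "poly R (of_nat n) \<noteq> 0"
    by (rule exists_pos_nat_not_root)
  define c where "c = - poly R (of_nat n) / of_nat n ^ i"
  have "legal_move d s i c"
    using i(1,2) n unfolding legal_move_def c_def by simp
  have "(\<Sum>j\<le>d. the ((s(i := Some c)) j) * of_nat n ^ j)
      = c * of_nat n ^ i + (\<Sum>j\<in>{..d} - {i}. the (s j) * of_nat n ^ j)"
    using i(1) by (simp add: sum.remove)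
  also have "(\<Sum>j\<in>{..d} - {i}. the (s j) * of_nat n ^ j) = poly R (of_nat n)"
    unfolding R_def by (simp add: poly_sum poly_monom)
  also have "c * of_nat n ^ i + poly R (of_nat n) = 0"
    unfolding c_def using n by simp
  finally have "of_rat (\<Sum>j\<le>d. the ((s(i := Some c)) j) * of_nat n ^ j) = (0 :: 'k)"
    by (simp only: of_rat_0)
  then have "poly (map_poly of_rat (final_poly d (s(i := Some c)))) (of_nat n :: 'k) = 0"
    unfolding poly_final_poly by (simp add: of_rat_sum of_rat_mult of_rat_power)
  moreover have "(of_nat n :: 'k) \<in> D"
    using of_nat_mem_unital_subring[OF assms(3)] .
  ultimately show ?thesis
    using \<open>legal_move d s i c\<close> unfolding wanda_goal_def by blast
qed

lemma wanda_wins_moving_last: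
  assumes "0 < d" "unital_subring D"
  shows "wanda_wins d D (odd (d + 1))"
proof -
  define Inv where "Inv k s = (if k = 0 then wanda_goal d D s else proper_position d k s)" for k s
  have "can_force d (wanda_goal d D) (odd (d + 1)) (d + 1) (\<lambda>_. None)"
  proof (rule can_force_by_invariant[where Inv = Inv])
    fix k s
    assume "Inv (Suc k) s" "odd (Suc k)"
    then have s: "proper_position d (Suc k) s"
      unfolding Inv_def by simp
    show "\<exists>i c. legal_move d s i c \<and> Inv k (s(i := Some c))"
    proof (cases "k = 0")
      case True
      then show ?thesis
        using wanda_last_move[OF assms(1) _ assms(2)] s unfolding Inv_def by simp
    next
      case False
      obtain j where "legal_move d s j 1"
        by (rule exists_legal_move[OF s])
      then show ?thesis
        using proper_position_move[OF s] False unfolding Inv_def by auto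
    qed
  next
    fix k s i c
    assume "Inv (Suc k) s" "even (Suc k)" "legal_move d s i c"
    then show "Inv k (s(i := Some c))"
      using proper_position_move unfolding Inv_def by (cases k) auto
  qed (use proper_position_start in \<open>auto simp: Inv_def\<close>)
  then show ?thesis
    unfolding wanda_wins_def .
qed

definition nonzero_indices :: "nat \<Rightarrow> position \<Rightarrow> nat set" where
  "nonzero_indices d s = {j. j \<le> d \<and> s j \<noteq> None \<and> s j \<noteq> Some 0}"

definition middle_free :: "nat \<Rightarrow> position \<Rightarrow> bool" where
  "middle_free d s \<longleftrightarrow> (\<exists>j. 0 < j \<and> j < d \<and> s j = None)"

text \<open>Nora's strategy: fill a free index among 1 and d - 1 if there is one, otherwise a
  free middle index, always with 0. For d \<ge> 5 this keeps 1 and d - 1 away from the last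
  move; for d \<le> 4 it guarantees that all middle coefficients are 0 except possibly the
  one left for the last move. The invariant counts the moves k still to be made.\<close>

definition nora_invariant :: "nat \<Rightarrow> nat \<Rightarrow> position \<Rightarrow> bool" where
  "nora_invariant d k s \<longleftrightarrow> proper_position d k s \<and>
     (5 \<le> d \<longrightarrow> 2 * card (free_indices d s \<inter> {1, d - 1}) < k) \<and>
     (d \<le> 4 \<longrightarrow> middle_free d s \<longrightarrow> card (nonzero_indices d s) + k div 2 \<le> (d + 1) div 2)"

definition favourable_last_index :: "nat \<Rightarrow> position \<Rightarrow> nat \<Rightarrow> bool" where
  "favourable_last_index d s i \<longleftrightarrow> i = 0 \<or> i = d \<or> (5 \<le> d \<and> 2 \<le> i \<and> i + 2 \<le> d) \<or>
     (0 < i \<and> i < d \<and> (\<forall>j. 0 < j \<and> j < d \<and> j \<noteq> i \<longrightarrow> s j = Some 0))"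

lemma finite_nonzero_indices [simp]: "finite (nonzero_indices d s)"
  unfolding nonzero_indices_def by auto

lemma nora_invariant_start: "nora_invariant d (d + 1) (\<lambda>_. None)"
proof -
  have "card (free_indices d (\<lambda>_. None) \<inter> {1, d - 1}) \<le> card {1, d - 1}"
    by (intro card_mono) auto
  also have "\<dots> \<le> 2"
    by (simp add: card_insert_le_m1)
  finally show ?thesis
    using proper_position_start unfolding nora_invariant_def nonzero_indices_def by auto
qed

lemma middle_zero_if_two_nonzero:
  assumes "proper_position d (Suc 0) s" "free_indices d s = {i}" "0 < i" "i < d"
    and "card (nonzero_indices d s) \<le> 2"
  shows "\<And>j. 0 < j \<Longrightarrow> j < d \<Longrightarrow> j \<noteq> i \<Longrightarrow> s j = Some 0"
proof -
  note set = free_indices_eq_singleton(3)[OF assms(2)]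
  have "{0, d} \<subseteq> nonzero_indices d s"
    using set[of 0] set[of d] assms(1,3,4) unfolding nonzero_indices_def proper_position_def by auto
  moreover have "card (nonzero_indices d s) \<le> card {0, d}"
    using assms(4,5) by simp
  ultimately have nonzero: "nonzero_indices d s = {0, d}"
    using card_seteq[where A = "{0, d}" and B = "nonzero_indices d s"] by simp
  show "s j = Some 0" if "0 < j" "j < d" "j \<noteq> i" for j
  proof -
    have "j \<notin> nonzero_indices d s"
      using that nonzero by simp
    then show ?thesis
      using that set[of j] unfolding nonzero_indices_def by simp
  qed
qed

lemma nora_invariant_last:
  assumes "2 \<le> d" "nora_invariant d (Suc 0) s" "free_indices d s = {i}"
  shows "favourable_last_index d s i"
proof (cases "i = 0 \<or> i = d")
  case False
  note i = free_indices_eq_singleton[OF assms(3)]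
  then have "0 < i" "i < d"
    using False by auto
  show ?thesis
  proof (cases "5 \<le> d")
    case True
    then have "free_indices d s \<inter> {1, d - 1} = {}"
      using assms(2) unfolding nora_invariant_def by simp
    then have "i \<noteq> 1" "i \<noteq> d - 1"
      using assms(3) by auto
    then show ?thesis
      using True \<open>0 < i\<close> \<open>i < d\<close> unfolding favourable_last_index_def by auto
  next
    case False
    have "middle_free d s"
      using \<open>0 < i\<close> \<open>i < d\<close> i(2) unfolding middle_free_def by auto
    then have "card (nonzero_indices d s) \<le> 2"
      using assms(2) False unfolding nora_invariant_def by auto
    then show ?thesis
      using middle_zero_if_two_nonzero[OF _ assms(3) \<open>0 < i\<close> \<open>i < d\<close>] assms(2) \<open>0 < i\<close> \<open>i < d\<close>
      unfolding favourable_last_index_def nora_invariant_def by blast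
  qed
qed (auto simp: favourable_last_index_def)

lemma exists_preferred_free_index:
  assumes "2 \<le> d" "proper_position d (Suc k) s"
  obtains j where "j \<in> free_indices d s"
    "free_indices d s \<inter> {1, d - 1} \<noteq> {} \<longrightarrow> j \<in> {1, d - 1}"
    "middle_free d s \<longrightarrow> 0 < j \<and> j < d"
proof (cases "free_indices d s \<inter> {1, d - 1} = {}")
  case False
  then obtain j where "j \<in> free_indices d s \<inter> {1, d - 1}"
    by blast
  then show ?thesis
    using that[of j] assms(1) by auto
next
  case True
  show ?thesis
  proof (cases "middle_free d s")
    case True
    then obtain j where "0 < j" "j < d" "s j = None"
      unfolding middle_free_def by blast
    then show ?thesis
      using that[of j] \<open>free_indices d s \<inter> {1, d - 1} = {}\<close> unfolding free_indices_def by auto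
  next
    case False
    obtain j where "legal_move d s j 1"
      by (rule exists_legal_move[OF assms(2)])
    then show ?thesis
      using that[of j] False \<open>free_indices d s \<inter> {1, d - 1} = {}\<close>
      unfolding free_indices_def legal_move_def by auto
  qed
qed

lemma nora_invariant_own_move:
  assumes "2 \<le> d" "nora_invariant d (Suc k) s" "odd (Suc k)" "k \<noteq> 0"
  shows "\<exists>j c. legal_move d s j c \<and> nora_invariant d k (s(j := Some c))"
proof -
  have s: "proper_position d (Suc k) s"
    and ends: "5 \<le> d \<Longrightarrow> 2 * card (free_indices d s \<inter> {1, d - 1}) < Suc k"
    and nonzero: "d \<le> 4 \<Longrightarrow> middle_free d s \<Longrightarrow>
      card (nonzero_indices d s) + Suc k div 2 \<le> (d + 1) div 2"
    using assms(2) unfolding nora_invariant_def by auto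
  obtain j where j: "j \<in> free_indices d s"
    "free_indices d s \<inter> {1, d - 1} \<noteq> {} \<longrightarrow> j \<in> {1, d - 1}"
    "middle_free d s \<longrightarrow> 0 < j \<and> j < d"
    by (rule exists_preferred_free_index[OF assms(1) s])
  define c :: rat where "c = (if j = 0 \<or> j = d then 1 else 0)"
  have legal: "legal_move d s j c"
    using j(1) unfolding free_indices_def legal_move_def c_def by auto
  define s' where "s' = s(j := Some c)"
  have ends': "2 * card (free_indices d s' \<inter> {1, d - 1}) < k" if "5 \<le> d"
  proof (cases "free_indices d s \<inter> {1, d - 1} = {}")
    case True
    then have "free_indices d s' \<inter> {1, d - 1} = {}"
      unfolding s'_def free_indices_move[OF legal] by blast
    then show ?thesis
      using assms(4) by simp
  next
    case False
    then have "j \<in> free_indices d s \<inter> {1, d - 1}"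
      using j by auto
    moreover have "free_indices d s' \<inter> {1, d - 1} = (free_indices d s \<inter> {1, d - 1}) - {j}"
      unfolding s'_def free_indices_move[OF legal] by blast
    ultimately have
      "card (free_indices d s' \<inter> {1, d - 1}) = card (free_indices d s \<inter> {1, d - 1}) - 1"
      "0 < card (free_indices d s \<inter> {1, d - 1})"
      by (auto simp: card_Diff_singleton card_gt_0_iff)
    then show ?thesis
      using ends[OF that] by linarith
  qed
  have nonzero': "card (nonzero_indices d s') + k div 2 \<le> (d + 1) div 2"
    if "d \<le> 4" "middle_free d s'"
  proof -
    have "middle_free d s"
      using that(2) unfolding middle_free_def s'_def by (auto split: if_splits)
    then have "0 < j" "j < d"
      using j(3) by auto
    then have "nonzero_indices d s' = nonzero_indices d s"
      using j(1) unfolding nonzero_indices_def free_indices_def s'_def c_def by auto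
    then show ?thesis
      using nonzero[OF that(1) \<open>middle_free d s\<close>] assms(3) by simp
  qed
  have "nora_invariant d k s'"
    using proper_position_move[OF s legal] ends' nonzero'
    unfolding nora_invariant_def s'_def by simp
  then show ?thesis
    using legal unfolding s'_def by blast
qed

lemma nora_invariant_other_move:
  assumes "nora_invariant d (Suc k) s" "even (Suc k)" "legal_move d s j c"
  shows "nora_invariant d k (s(j := Some c))"
proof -
  define s' where "s' = s(j := Some c)"
  have s: "proper_position d (Suc k) s"
    and ends: "5 \<le> d \<Longrightarrow> 2 * card (free_indices d s \<inter> {1, d - 1}) < Suc k"
    and nonzero: "d \<le> 4 \<Longrightarrow> middle_free d s \<Longrightarrow>
      card (nonzero_indices d s) + Suc k div 2 \<le> (d + 1) div 2"
    using assms(1) unfolding nora_invariant_def by auto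
  have ends': "2 * card (free_indices d s' \<inter> {1, d - 1}) < k" if "5 \<le> d"
  proof -
    have "card (free_indices d s' \<inter> {1, d - 1}) \<le> card (free_indices d s \<inter> {1, d - 1})"
      unfolding s'_def free_indices_move[OF assms(3)] by (intro card_mono) auto
    then show ?thesis
      using ends[OF that] assms(2) by presburger
  qed
  have nonzero': "card (nonzero_indices d s') + k div 2 \<le> (d + 1) div 2"
    if "d \<le> 4" "middle_free d s'"
  proof -
    have "middle_free d s"
      using that(2) unfolding middle_free_def s'_def by (auto split: if_splits)
    have "nonzero_indices d s' \<subseteq> insert j (nonzero_indices d s)"
      unfolding nonzero_indices_def s'_def by auto
    then have "card (nonzero_indices d s') \<le> card (insert j (nonzero_indices d s))"
      by (intro card_mono) auto
    also have "\<dots> \<le> card (nonzero_indices d s) + 1"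
      by (simp add: card_insert_if)
    finally show ?thesis
      using nonzero[OF that(1) \<open>middle_free d s\<close>] assms(2) by simp
  qed
  show ?thesis
    using proper_position_move[OF s assms(3)] ends' nonzero'
    unfolding nora_invariant_def s'_def by simp
qed

context padic_field
begin

lemma nora_last_move:
  fixes D :: "'k set"
  assumes "2 \<le> d" "proper_position d (Suc 0) s" "free_indices d s = {i}"
    and "favourable_last_index d s i"
  shows "\<exists>c. legal_move d s i c \<and> nora_goal d D (s(i := Some c))"
proof -
  define a where "a j = the (s j)" for j
  note i = free_indices_eq_singleton[OF assms(3)]
  have set: "s j = Some (a j)" if "j \<le> d" "j \<noteq> i" for j
    using i(3)[OF that] unfolding a_def by auto
  have a0: "a 0 \<noteq> 0" if "i \<noteq> 0"
    using set[of 0] that assms(2) unfolding proper_position_def by auto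
  have ad: "a d \<noteq> 0" if "i \<noteq> d"
    using set[of d] that assms(2) unfolding proper_position_def by auto
  have "i = 0 \<or> i = d \<or> (5 \<le> d \<and> 2 \<le> i \<and> i + 2 \<le> d) \<or>
      (0 < i \<and> i < d \<and> (\<forall>j. 0 < j \<and> j < d \<and> j \<noteq> i \<longrightarrow> a j = 0))"
    using assms(4) set unfolding favourable_last_index_def by auto
  then obtain c where c: "i = 0 \<or> i = d \<longrightarrow> c \<noteq> 0"
    "\<forall>x :: 'k. (\<Sum>j\<le>d. of_rat ((a(i := c)) j) * x ^ j) \<noteq> 0"
    using exists_rootless_completion[OF assms(1) a0 ad] by blast
  have "legal_move d s i c"
    using i c(1) unfolding legal_move_def by auto
  moreover have "poly (map_poly of_rat (final_poly d (s(i := Some c)))) x \<noteq> 0" for x :: 'k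
  proof -
    have "(\<Sum>j\<le>d. of_rat (the ((s(i := Some c)) j)) * x ^ j)
        = (\<Sum>j\<le>d. of_rat ((a(i := c)) j) * x ^ j)"
      unfolding a_def by (intro sum.cong) auto
    then show ?thesis
      using c(2) by (simp add: poly_final_poly)
  qed
  ultimately show ?thesis
    unfolding nora_goal_def wanda_goal_def by blast
qed

lemma nora_wins_moving_last:
  fixes D :: "'k set"
  assumes "2 \<le> d"
  shows "nora_wins d D (even (d + 1))"
proof -
  define Inv where "Inv k s = (if k = 0 then nora_goal d D s else nora_invariant d k s)" for k s
  have "can_force d (nora_goal d D) (odd (d + 1)) (d + 1) (\<lambda>_. None)"
  proof (rule can_force_by_invariant[where Inv = Inv])
    fix k s
    assume "Inv (Suc k) s" "odd (Suc k)"
    then have s: "nora_invariant d (Suc k) s"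
      unfolding Inv_def by simp
    show "\<exists>i c. legal_move d s i c \<and> Inv k (s(i := Some c))"
    proof (cases "k = 0")
      case True
      have proper: "proper_position d (Suc 0) s"
        using s True unfolding nora_invariant_def by simp
      then obtain i where i: "free_indices d s = {i}"
        by (rule proper_position_last)
      have "favourable_last_index d s i"
        using nora_invariant_last[OF assms _ i] s True by simp
      then obtain c where "legal_move d s i c" "nora_goal d D (s(i := Some c))"
        using nora_last_move[OF assms proper i] by blast
      then show ?thesis
        using True unfolding Inv_def by auto
    next
      case False
      then show ?thesis
        using nora_invariant_own_move[OF assms s \<open>odd (Suc k)\<close>] unfolding Inv_def by auto
    qed
  next
    fix k s i c
    assume "Inv (Suc k) s" "even (Suc k)" "legal_move d s i c"
    then show "Inv k (s(i := Some c))"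
      using nora_invariant_other_move unfolding Inv_def by (cases k) auto
  qed (use nora_invariant_start in \<open>auto simp: Inv_def\<close>)
  then show ?thesis
    unfolding nora_wins_def by simp
qed

end

theorem theorem2:
  fixes d p :: nat
    and av :: "'k::field_char_0 \<Rightarrow> real"
    and D :: "'k set"
    and wanda_first :: bool
  assumes "d > 1"
    and "prime p"
    and "is_Qp p av"
    and "unital_subring D"
  shows "if wanda_moves_last d wanda_first then wanda_wins d D wanda_first
         else nora_wins d D wanda_first"
proof -
  interpret padic_field p av
    using assms(2,3) by unfold_locales
  show ?thesis
  proof (cases "wanda_moves_last d wanda_first")
    case True
    then have "wanda_first = odd (d + 1)"
      unfolding wanda_moves_last_def by simp
    then show ?thesis
      using True wanda_wins_moving_last[of d D] assms(1,4) by simp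
  next
    case False
    then have "wanda_first = even (d + 1)"
      unfolding wanda_moves_last_def by simp
    then show ?thesis
      using False nora_wins_moving_last[of d D] assms(1) by simp
  qed
qed

end
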